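(* Let $P\subset\mathbb{P}^7$ be a fixed plane. The intersection of three generic quadrics in $\mathbb{P}^7$ containing $P$ is smooth.
   Context: "Generic quadrics containing $P$" means generic elements of the $30$-dimensional space of quadratic forms on $\mathbb{C}^8$ vanishing on $P$ (i.e. lying in a nonempty Zariski open subset of the relevant parameter space). *)

theory Defs
  imports "HOL-Analysis.Analysis"
begin

inductive_set poly_fun :: "(('v \<Rightarrow> complex) \<Rightarrow> complex) set" where
  const: "(\<lambda>_. c) \<in> poly_fun"
| var:   "(\<lambda>z. z v) \<in> poly_fun"
| add:   "f \<in> poly_fun \<Longrightarrow> g \<in> poly_fun \<Longrightarrow> (\<lambda>z. f z + g z) \<in> poly_fun"
| mult:  "f \<in> poly_fun \<Longrightarrow> g \<in> poly_fun \<Longrightarrow> (\<lambda>z. f z * g z) \<in> poly_fun"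

text \<open>A triple of quadratic forms on C^8 is given by coefficients c (k,i,j), k in 3,
  of the monomials x_i x_j with i \<le> j (entries with i > j are ignored).\<close>
type_synonym quad_triple = "3 \<times> 8 \<times> 8 \<Rightarrow> complex"

definition coef :: "quad_triple \<Rightarrow> 3 \<Rightarrow> 8 \<Rightarrow> 8 \<Rightarrow> complex" where
  "coef c k i j = (if i \<le> j then c (k, i, j) else 0)"

definition quad :: "quad_triple \<Rightarrow> 3 \<Rightarrow> complex ^ 8 \<Rightarrow> complex" where
  "quad c k x = (\<Sum>i\<in>UNIV. \<Sum>j\<in>UNIV. coef c k i j * x $ i * x $ j)"

definition quad_grad :: "quad_triple \<Rightarrow> 3 \<Rightarrow> complex ^ 8 \<Rightarrow> complex ^ 8" where
  "quad_grad c k x = (\<chi> l. (\<Sum>j\<in>UNIV. coef c k l j * x $ j) + (\<Sum>i\<in>UNIV. coef c k i l * x $ i))"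

text \<open>Plane P = projectivisation of span_C {u1,u2,u3}, with u1,u2,u3 C-linearly independent.\<close>
definition lin_indep3 :: "complex ^ 8 \<Rightarrow> complex ^ 8 \<Rightarrow> complex ^ 8 \<Rightarrow> bool" where
  "lin_indep3 u1 u2 u3 \<longleftrightarrow> (\<forall>a b d. a *s u1 + b *s u2 + d *s u3 = 0 \<longrightarrow> a = 0 \<and> b = 0 \<and> d = 0)"

definition contains_plane :: "quad_triple \<Rightarrow> complex ^ 8 \<Rightarrow> complex ^ 8 \<Rightarrow> complex ^ 8 \<Rightarrow> bool" where
  "contains_plane c u1 u2 u3 \<longleftrightarrow> (\<forall>k a b d. quad c k (a *s u1 + b *s u2 + d *s u3) = 0)"

text \<open>The intersection X = V(q_1,q_2,q_3) in P^7 is smooth (of codimension 3): at every point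
  of X the Jacobian matrix of (q_1,q_2,q_3) has rank 3, i.e. the three gradients are linearly
  independent over C.\<close>
definition smooth_intersection :: "quad_triple \<Rightarrow> bool" where
  "smooth_intersection c \<longleftrightarrow>
     (\<forall>x :: complex ^ 8. x \<noteq> 0 \<and> (\<forall>k. quad c k x = 0) \<longrightarrow>
        (\<forall>a :: 3 \<Rightarrow> complex. (\<Sum>k\<in>UNIV. a k *s quad_grad c k x) = 0 \<longrightarrow> (\<forall>k. a k = 0)))"

end

theory Submission
  imports Defs "Jordan_Normal_Form.Determinant" "HOL-Computational_Algebra.Polynomial"
begin

(*
  A point of X = V(q1,q2,q3) is singular iff some x <> 0 and multipliers a <> 0 solve the
  eleven bihomogeneous equations q_k(x) = 0 (bidegree (2,0)) and sum_k a_k grad q_k(x) = 0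
  (bidegree (1,1)).  Their Macaulay matrix A(c) in bidegree (33,1) -- rows indexed by the
  monomials of that bidegree, columns by the monomial multiples of the equations -- has entries
  polynomial in the coefficients c.  If A(c) has full row rank, every monomial x_i^33 a_l is a
  combination of the equations, so it vanishes at any solution, forcing x = 0 or a = 0.
  Full row rank is certified by the polynomial F(c) = det (A(c) A(c0)^* ) for a fixed c0,
  and F(c0) <> 0 (a Gram determinant) as soon as A(c0) itself has full row rank.

  The witness c0 is the triple of diagonal forms
  q_k = sum_i lam_ki x_i^2 for an explicit integer matrix lam all of whose 3x3 minors are
  nonzero: then x_i^5 a_l lies in the ideal, and since 33 > 8*4 so does every monomial of
  bidegree (33,1).  The witness contains an explicit plane; an invertible matrix V moving that
  plane onto P turns the criterion into the polynomial c |-> F(c o V) of the theorem.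
*)

no_notation vec_index (infixl \<open>$\<close> 100)

lemma poly_fun_sum:
  assumes "finite A" "\<And>a. a \<in> A \<Longrightarrow> (\<lambda>z. f a z) \<in> poly_fun"
  shows "(\<lambda>z. \<Sum>a\<in>A. f a z) \<in> poly_fun"
  using assms
proof (induction A rule: finite_induct)
  case empty
  then show ?case using poly_fun.const[of 0] by simp
next
  case (insert x F)
  then have "(\<lambda>z. f x z + (\<Sum>a\<in>F. f a z)) \<in> poly_fun"
    by (intro poly_fun.add) auto
  then show ?case using insert by simp
qed

lemma poly_fun_prod:
  assumes "finite A" "\<And>a. a \<in> A \<Longrightarrow> (\<lambda>z. f a z) \<in> poly_fun"
  shows "(\<lambda>z. \<Prod>a\<in>A. f a z) \<in> poly_fun"
  using assms
proof (induction A rule: finite_induct)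
  case empty
  then show ?case using poly_fun.const[of 1] by simp
next
  case (insert x F)
  then have "(\<lambda>z. f x z * (\<Prod>a\<in>F. f a z)) \<in> poly_fun"
    by (intro poly_fun.mult) auto
  then show ?case using insert by simp
qed

lemma poly_fun_if: "f \<in> poly_fun \<Longrightarrow> g \<in> poly_fun \<Longrightarrow> (\<lambda>z. if P then f z else g z) \<in> poly_fun"
  by (cases P) auto

lemma poly_fun_compose:
  assumes "f \<in> poly_fun" "\<And>v. (\<lambda>c. \<sigma> c v) \<in> poly_fun"
  shows "(\<lambda>c. f (\<sigma> c)) \<in> poly_fun"
  using assms(1)
proof (induction f rule: poly_fun.induct)
  case (var v)
  then show ?case using assms(2) by simp
qed (auto intro: poly_fun.intros)

lemma poly_fun_coef: "(\<lambda>c. coef c k i j) \<in> poly_fun"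
  unfolding coef_def by (intro poly_fun_if poly_fun.var poly_fun.const)

lemma poly_fun_det:
  assumes M: "\<And>d. M d \<in> carrier_mat n n"
    and entries: "\<And>i j. i < n \<Longrightarrow> j < n \<Longrightarrow> (\<lambda>d. M d $$ (i,j)) \<in> poly_fun"
  shows "(\<lambda>d. det (M d)) \<in> poly_fun"
proof -
  have leibniz: "det (M d) = (\<Sum>p\<in>{p. p permutes {0..<n}}.
      of_int (signof p) * (\<Prod>i\<in>{0..<n}. M d $$ (i, p i)))" for d
    by (subst det_def'[OF M]) simp
  have "(\<lambda>d. \<Sum>p\<in>{p. p permutes {0..<n}}. of_int (signof p) * (\<Prod>i\<in>{0..<n}. M d $$ (i, p i)))
          \<in> poly_fun"
  proof (intro poly_fun_sum poly_fun.mult poly_fun.const poly_fun_prod)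
    fix p i assume "p \<in> {p. p permutes {0..<n}}" "i \<in> {0..<n}"
    then show "(\<lambda>d. M d $$ (i, p i)) \<in> poly_fun"
      by (intro entries) (auto simp: permutes_in_image)
  qed (simp_all add: finite_permutations)
  then show ?thesis by (simp add: leibniz)
qed

section \<open>Linear changes of coordinates\<close>

definition pair :: "'a::comm_semiring_1 ^ 'n \<Rightarrow> 'a ^ 'n \<Rightarrow> 'a" where
  "pair x y = (\<Sum>i\<in>UNIV. x $ i * y $ i)"

lemma pair_matrix: "pair x (A *v y) = pair (transpose A *v x) y"
proof -
  have "pair x (A *v y) = (\<Sum>i\<in>UNIV. \<Sum>j\<in>UNIV. x $ i * A $ i $ j * y $ j)"
    by (simp add: pair_def matrix_vector_mult_def sum_distrib_left mult_ac)
  also have "\<dots> = (\<Sum>j\<in>UNIV. \<Sum>i\<in>UNIV. x $ i * A $ i $ j * y $ j)"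
    by (rule sum.swap)
  also have "\<dots> = pair (transpose A *v x) y"
    by (simp add: pair_def matrix_vector_mult_def transpose_def sum_distrib_left sum_distrib_right mult_ac)
  finally show ?thesis .
qed

text \<open>The symmetric matrix of the form \<open>2 q\<^sub>k\<close>; it determines the coefficients, the form and
  its gradient.\<close>
definition gram :: "quad_triple \<Rightarrow> 3 \<Rightarrow> complex ^ 8 ^ 8" where
  "gram c k = (\<chi> i j. coef c k i j + coef c k j i)"

lemma gram_symmetric: "transpose (gram c k) = gram c k"
  by (simp add: gram_def transpose_def Finite_Cartesian_Product.vec_eq_iff add.commute)

lemma coef_gram:
  "coef c k i j = (if i < j then gram c k $ i $ j else if i = j then gram c k $ i $ i / 2 else 0)"
  unfolding gram_def coef_def by auto

lemma quad_gram: "quad c k x = pair x (gram c k *v x) / 2"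
proof -
  have "(\<Sum>i\<in>UNIV. \<Sum>j\<in>UNIV. coef c k j i * x $ i * x $ j) = quad c k x"
    unfolding quad_def by (subst sum.swap) (simp add: mult_ac)
  then have "pair x (gram c k *v x) = quad c k x + quad c k x"
    unfolding pair_def gram_def matrix_vector_mult_def quad_def
    by (simp add: algebra_simps sum_distrib_left sum.distrib)
  then show ?thesis by simp
qed

lemma quad_grad_gram: "quad_grad c k x = gram c k *v x"
  unfolding quad_grad_def gram_def matrix_vector_mult_def
  by (simp add: algebra_simps sum.distrib)

definition triple_of_gram :: "(3 \<Rightarrow> complex ^ 8 ^ 8) \<Rightarrow> quad_triple" where
  "triple_of_gram S = (\<lambda>(k, i, j).
     if i < j then S k $ i $ j else if i = j then S k $ i $ i / 2 else 0)"

lemma gram_triple_of_gram: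
  assumes sym: "transpose (S k) = S k"
  shows "gram (triple_of_gram S) k = S k"
proof -
  have "S k $ j $ i = S k $ i $ j" for i j
  proof -
    have "transpose (S k) $ i $ j = S k $ i $ j" by (simp only: sym)
    then show ?thesis by (simp add: transpose_def)
  qed
  then have "gram (triple_of_gram S) k $ i $ j = S k $ i $ j" for i j
    by (cases i j rule: linorder_cases) (auto simp: gram_def coef_def triple_of_gram_def)
  then show ?thesis by (simp add: Finite_Cartesian_Product.vec_eq_iff)
qed

text \<open>The coefficient triple of the forms \<open>w \<mapsto> q\<^sub>k (V w)\<close>.\<close>
definition pullback :: "quad_triple \<Rightarrow> complex ^ 8 ^ 8 \<Rightarrow> quad_triple" where
  "pullback c V = triple_of_gram (\<lambda>k. transpose V ** gram c k ** V)"

lemma gram_pullback: "gram (pullback c V) k = transpose V ** gram c k ** V"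
  unfolding pullback_def
  by (rule gram_triple_of_gram)
    (simp only: matrix_transpose_mul gram_symmetric
      Finite_Cartesian_Product.transpose_transpose matrix_mul_assoc)

lemma quad_pullback: "quad (pullback c V) k w = quad c k (V *v w)"
  unfolding quad_gram gram_pullback matrix_vector_mul_assoc[symmetric]
  by (subst pair_matrix) (simp only: Finite_Cartesian_Product.transpose_transpose)

lemma quad_grad_pullback: "quad_grad (pullback c V) k w = transpose V *v quad_grad c k (V *v w)"
  by (simp only: quad_grad_gram gram_pullback matrix_vector_mul_assoc matrix_mul_assoc)

lemma coef_pullback_pullback:
  assumes "W ** V = Finite_Cartesian_Product.mat 1"
  shows "coef (pullback (pullback c W) V) k i j = coef c k i j"
proof -
  have "gram (pullback (pullback c W) V) k = transpose (W ** V) ** gram c k ** (W ** V)"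
    by (simp add: gram_pullback matrix_transpose_mul matrix_mul_assoc)
  then show ?thesis by (simp add: coef_gram assms)
qed

lemma poly_fun_pullback: "(\<lambda>c. pullback c V v) \<in> poly_fun"
proof -
  obtain k i j where v: "v = (k, i, j)" by (cases v)
  have entry: "(\<lambda>c. (transpose V ** gram c k ** V) $ p $ q) \<in> poly_fun" for p q
    unfolding matrix_matrix_mult_def transpose_def gram_def
    by (auto intro!: poly_fun_sum poly_fun.mult poly_fun.add poly_fun.const poly_fun_coef)
  have "(\<lambda>c. (transpose V ** gram c k ** V) $ p $ q / 2) \<in> poly_fun" for p q
    using poly_fun.mult[OF entry poly_fun.const[of "1/2"]] by simp
  with entry show ?thesis
    unfolding v pullback_def triple_of_gram_def
    by (auto intro!: poly_fun_if poly_fun.const)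
qed

lemma smooth_intersection_pullback:
  assumes VW: "V ** W = Finite_Cartesian_Product.mat 1" and smooth: "smooth_intersection (pullback c V)"
  shows "smooth_intersection c"
  unfolding smooth_intersection_def
proof (intro allI impI)
  fix x :: "complex ^ 8" and a :: "3 \<Rightarrow> complex" and k :: 3
  assume x: "x \<noteq> 0 \<and> (\<forall>k. quad c k x = 0)" and a: "(\<Sum>k\<in>UNIV. a k *s quad_grad c k x) = 0"
  define w where "w = W *v x"
  have Vw: "V *v w = x" unfolding w_def by (simp add: matrix_vector_mul_assoc VW)
  then have "w \<noteq> 0" using x by auto
  moreover have "\<forall>k. quad (pullback c V) k w = 0" using x by (simp add: quad_pullback Vw)
  moreover have "(\<Sum>k\<in>UNIV. a k *s quad_grad (pullback c V) k w)
      = transpose V *v (\<Sum>k\<in>UNIV. a k *s quad_grad c k x)"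
    by (simp add: quad_grad_pullback Vw vec.sum vec.scale)
  ultimately show "a k = 0" using smooth a unfolding smooth_intersection_def by auto
qed

lemma contains_plane_pullback:
  assumes WV: "W ** V = Finite_Cartesian_Product.mat 1" and c: "contains_plane c p1 p2 p3"
  shows "contains_plane (pullback c W) (V *v p1) (V *v p2) (V *v p3)"
  unfolding contains_plane_def
proof (intro allI)
  fix k a b d
  have "W *v (a *s (V *v p1) + b *s (V *v p2) + d *s (V *v p3)) = a *s p1 + b *s p2 + d *s p3"
    by (simp add: vec.add vec.scale matrix_vector_mul_assoc WV)
  then show "quad (pullback c W) k (a *s (V *v p1) + b *s (V *v p2) + d *s (V *v p3)) = 0"
    using c by (simp add: quad_pullback contains_plane_def)
qed

section \<open>Linear independence of monomial functions\<close>

lemma univariate_coeffs_zero: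
  assumes N: "finite N" and zero: "\<And>t::complex. (\<Sum>n\<in>N. c n * t ^ n) = 0" and n: "n \<in> N"
  shows "c n = 0"
proof -
  define p where "p = (\<Sum>m\<in>N. monom (c m) m)"
  have "poly p t = 0" for t using zero by (simp add: p_def poly_sum poly_monom)
  then have "p = 0" using poly_all_0_iff_0 by blast
  moreover have "coeff p n = c n"
    using N n by (simp add: p_def coeff_sum coeff_monom sum.delta)
  ultimately show ?thesis by simp
qed

text \<open>If a polynomial function vanishes identically, so does each of its slices by the degree in
  one variable \<open>w\<close> (viewing it as a polynomial in \<open>z w\<close> with polynomial coefficients).\<close>
lemma vanishing_slice:
  fixes f :: "('v \<Rightarrow> nat) \<Rightarrow> complex"
  assumes S: "finite S" and w: "w \<notin> V"
    and zero: "\<And>z. (\<Sum>e\<in>S. f e * (\<Prod>v\<in>insert w V. z v ^ e v)) = 0"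
    and V: "finite V"
  shows "(\<Sum>e\<in>{e\<in>S. e w = n}. f e * (\<Prod>v\<in>V. z v ^ e v)) = 0"
proof (cases "n \<in> (\<lambda>e. e w) ` S")
  case True
  define g where "g m = (\<Sum>e\<in>{e\<in>S. e w = m}. f e * (\<Prod>v\<in>V. z v ^ e v))" for m
  have "(\<Sum>m\<in>(\<lambda>e. e w) ` S. g m * t ^ m) = 0" for t
  proof -
    have "(\<Sum>m\<in>(\<lambda>e. e w) ` S. g m * t ^ m)
        = (\<Sum>m\<in>(\<lambda>e. e w) ` S. \<Sum>e\<in>{e\<in>S. e w = m}. f e * (\<Prod>v\<in>V. z v ^ e v) * t ^ e w)"
      unfolding g_def by (intro sum.cong refl) (simp add: sum_distrib_right)
    also have "\<dots> = (\<Sum>e\<in>S. f e * (\<Prod>v\<in>V. z v ^ e v) * t ^ e w)"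
      by (rule sum.image_gen[OF S, symmetric])
    also have "\<dots> = (\<Sum>e\<in>S. f e * (\<Prod>v\<in>insert w V. (z(w := t)) v ^ e v))"
    proof (intro sum.cong refl)
      fix e
      have "(\<Prod>v\<in>V. (z(w := t)) v ^ e v) = (\<Prod>v\<in>V. z v ^ e v)"
        using w by (intro prod.cong refl) auto
      then show "f e * (\<Prod>v\<in>V. z v ^ e v) * t ^ e w
          = f e * (\<Prod>v\<in>insert w V. (z(w := t)) v ^ e v)"
        using w V by (simp add: mult_ac)
    qed
    also have "\<dots> = 0" by (rule zero)
    finally show ?thesis .
  qed
  then have "g n = 0" using univariate_coeffs_zero[of _ g] S True by blast
  then show ?thesis by (simp add: g_def)
next
  case False
  then have "{e\<in>S. e w = n} = {}" by auto
  then show ?thesis by (metis sum.empty)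
qed

lemma monomials_independent_on:
  fixes V :: "'v set" and f :: "('v \<Rightarrow> nat) \<Rightarrow> complex"
  assumes "finite V" "finite S" "inj_on (\<lambda>e. restrict e V) S"
    and "\<And>z. (\<Sum>e\<in>S. f e * (\<Prod>v\<in>V. z v ^ e v)) = 0" and "e \<in> S"
  shows "f e = 0"
  using assms
proof (induction V arbitrary: S e rule: finite_induct)
  case empty
  then have "S = {e}" by (auto simp: inj_on_def)
  then show ?case using empty.prems(3) by simp
next
  case (insert w V)
  define S0 where "S0 = {e'\<in>S. e' w = e w}"
  have inj: "inj_on (\<lambda>e. restrict e V) S0"
  proof (rule inj_onI)
    fix a b assume a: "a \<in> S0" and b: "b \<in> S0" and eq: "restrict a V = restrict b V"
    have "a v = b v" if "v \<in> V" for v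
      using fun_cong[OF eq, of v] that by simp
    moreover have "a w = b w" using a b by (simp add: S0_def)
    ultimately have "restrict a (insert w V) = restrict b (insert w V)"
      by (auto simp: restrict_def fun_eq_iff)
    then show "a = b"
      by (rule inj_onD[OF insert.prems(2)]) (use a b in \<open>simp_all add: S0_def\<close>)
  qed
  have zero: "(\<Sum>e'\<in>S0. f e' * (\<Prod>v\<in>V. z v ^ e' v)) = 0" for z
    unfolding S0_def using vanishing_slice[OF insert.prems(1) insert.hyps(2) insert.prems(3)]
      insert.hyps(1) by blast
  have "finite S0" "e \<in> S0" using insert.prems(1,4) by (auto simp: S0_def)
  then show ?case using insert.IH[OF _ inj zero] by blast
qed

lemma scaled_right_inverse:
  assumes A: "A \<in> carrier_mat n m" and B: "B \<in> carrier_mat m n"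
  shows "A * (B * adj_mat (A * B)) = det (A * B) \<cdot>\<^sub>m 1\<^sub>m n"
proof -
  have AB: "A * B \<in> carrier_mat n n" using A B by (rule mult_carrier_mat)
  have "A * (B * adj_mat (A * B)) = A * B * adj_mat (A * B)"
    using A B adj_mat(1)[OF AB] by (simp add: assoc_mult_mat)
  also have "\<dots> = det (A * B) \<cdot>\<^sub>m 1\<^sub>m n" by (rule adj_mat(2)[OF AB])
  finally show ?thesis .
qed

text \<open>\<open>\<bar>z\<bar>\<^sup>2 = z\<^sup>* z\<close>, the identity behind positivity of Gram matrices.\<close>
lemma norm_square_cnj: "cnj z * z = complex_of_real ((cmod z)\<^sup>2)"
  by (subst complex_norm_square) simp

definition conj_transpose :: "complex mat \<Rightarrow> complex mat" where
  "conj_transpose A = mat (dim_col A) (dim_row A) (\<lambda>(j, i). cnj (A $$ (i, j)))"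

lemma conj_transpose_carrier: "A \<in> carrier_mat n m \<Longrightarrow> conj_transpose A \<in> carrier_mat m n"
  unfolding conj_transpose_def by simp

lemma det_gram_nonzero:
  assumes A: "A \<in> carrier_mat n m"
    and reach: "\<And>\<iota>. \<iota> < n \<Longrightarrow>
       \<exists>l. \<forall>i<n. (\<Sum>j\<in>{0..<m}. A $$ (i, j) * l j) = (if i = \<iota> then 1 else 0)"
  shows "det (A * conj_transpose A) \<noteq> 0"
proof
  let ?B = "conj_transpose A"
  have B: "?B \<in> carrier_mat m n" using A by (rule conj_transpose_carrier)
  assume "det (A * ?B) = 0"
  then obtain v where v: "v \<in> carrier_vec n" "v \<noteq> 0\<^sub>v n" "(A * ?B) *\<^sub>v v = 0\<^sub>v n"
    using det_0_iff_vec_prod_zero[OF mult_carrier_mat[OF A B]] by blast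
  define w where "w = ?B *\<^sub>v v"
  have w: "w \<in> carrier_vec m" unfolding w_def using B v(1) by (rule mult_mat_vec_carrier)
  have Aw: "(\<Sum>j\<in>{0..<m}. A $$ (i, j) * vec_index w j) = 0" if "i < n" for i
  proof -
    have "A *\<^sub>v w = 0\<^sub>v n"
      using v(3) by (simp add: w_def assoc_mult_mat_vec[OF A B v(1)])
    then have "vec_index (A *\<^sub>v w) i = 0" using that by simp
    moreover have "vec_index (A *\<^sub>v w) i = (\<Sum>j\<in>{0..<m}. A $$ (i, j) * vec_index w j)"
      using A w that by (simp add: scalar_prod_def)
    ultimately show ?thesis by simp
  qed
  have cnj_w: "cnj (vec_index w j) = (\<Sum>i\<in>{0..<n}. A $$ (i, j) * cnj (vec_index v i))"
    if "j < m" for j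
    using that A v(1) by (simp add: w_def conj_transpose_def scalar_prod_def cnj_sum)
  text \<open>First \<open>w = A\<^sup>* v\<close> vanishes, since \<open>\<parallel>w\<parallel>\<^sup>2 = v\<^sup>* A w = 0\<close>.\<close>
  have "(\<Sum>j\<in>{0..<m}. cnj (vec_index w j) * vec_index w j)
      = (\<Sum>i\<in>{0..<n}. cnj (vec_index v i) * (\<Sum>j\<in>{0..<m}. A $$ (i, j) * vec_index w j))"
    by (simp add: cnj_w sum_distrib_left sum_distrib_right mult_ac) (rule sum.swap)
  also have "\<dots> = 0" by (simp add: Aw)
  finally have "(\<Sum>j\<in>{0..<m}. complex_of_real ((cmod (vec_index w j))\<^sup>2)) = 0"
    by (simp only: norm_square_cnj)
  then have "(\<Sum>j\<in>{0..<m}. (cmod (vec_index w j))\<^sup>2) = 0"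
    by (simp only: of_real_sum[symmetric] of_real_eq_0_iff)
  then have w0: "vec_index w j = 0" if "j < m" for j
    using that by (subst (asm) sum_nonneg_eq_0_iff) auto
  text \<open>Then every coordinate of \<open>v\<close> vanishes, by testing against a preimage of a unit vector.\<close>
  have "vec_index v \<iota> = 0" if \<iota>: "\<iota> < n" for \<iota>
  proof -
    obtain l where l: "\<And>i. i < n \<Longrightarrow>
        (\<Sum>j\<in>{0..<m}. A $$ (i, j) * l j) = (if i = \<iota> then 1 else 0)"
      using reach[OF \<iota>] by blast
    have "cnj (vec_index v \<iota>) = (\<Sum>i\<in>{0..<n}. if i = \<iota> then cnj (vec_index v i) else 0)"
      using \<iota> by simp
    also have "\<dots> = (\<Sum>i\<in>{0..<n}. cnj (vec_index v i) * (\<Sum>j\<in>{0..<m}. A $$ (i, j) * l j))"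
      by (intro sum.cong refl) (simp add: l)
    also have "\<dots> = (\<Sum>j\<in>{0..<m}. l j * cnj (vec_index w j))"
      by (simp add: cnj_w sum_distrib_left sum_distrib_right mult_ac) (rule sum.swap)
    also have "\<dots> = 0" by (simp add: w0)
    finally show ?thesis by simp
  qed
  then have "v = 0\<^sub>v n" using v(1) by (intro eq_vecI) auto
  then show False using v(2) by simp
qed

text \<open>The variables are the coordinates \<open>x\<^sub>0,\<dots>,x\<^sub>7\<close> of a point and the multipliers
  \<open>a\<^sub>1,a\<^sub>2,a\<^sub>3\<close> of the gradients; monomials are given by their exponent vectors.\<close>
type_synonym var = "8 + 3"
type_synonym expo = "var \<Rightarrow> nat"

definition monomial :: "expo \<Rightarrow> (var \<Rightarrow> complex) \<Rightarrow> complex" where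
  "monomial e z = (\<Prod>v\<in>UNIV. z v ^ e v)"

definition deg_x :: "expo \<Rightarrow> nat" where "deg_x e = (\<Sum>i\<in>UNIV. e (Inl i))"
definition deg_a :: "expo \<Rightarrow> nat" where "deg_a e = (\<Sum>k\<in>UNIV. e (Inr k))"

definition mono_exps :: "nat \<Rightarrow> nat \<Rightarrow> expo set" where
  "mono_exps d1 d2 = {e. deg_x e = d1 \<and> deg_a e = d2}"

definition add_exp :: "expo \<Rightarrow> expo \<Rightarrow> expo" where "add_exp s t = (\<lambda>v. s v + t v)"

definition unit_exp :: "var \<Rightarrow> nat \<Rightarrow> expo" where "unit_exp v n = (\<lambda>u. if u = v then n else 0)"

lemma monomial_add: "monomial (add_exp s t) z = monomial s z * monomial t z"
  unfolding monomial_def add_exp_def by (simp add: power_add prod.distrib)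

lemma monomial_unit: "monomial (unit_exp v n) z = z v ^ n"
proof -
  have "monomial (unit_exp v n) z = (\<Prod>u\<in>UNIV. if u = v then z v ^ n else 1)"
    unfolding monomial_def unit_exp_def by (intro prod.cong) auto
  then show ?thesis by simp
qed

lemma monomial_zero: "monomial (\<lambda>_. 0) z = 1"
  unfolding monomial_def by simp

lemma deg_add: "deg_x (add_exp s t) = deg_x s + deg_x t" "deg_a (add_exp s t) = deg_a s + deg_a t"
  unfolding deg_x_def deg_a_def add_exp_def by (simp_all add: sum.distrib)

lemma deg_unit:
  "deg_x (unit_exp (Inl i) n) = n" "deg_a (unit_exp (Inl i) n) = 0"
  "deg_x (unit_exp (Inr k) n) = 0" "deg_a (unit_exp (Inr k) n) = n"
  unfolding deg_x_def deg_a_def unit_exp_def by simp_all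

lemma deg_zero: "deg_x (\<lambda>_. 0) = 0" "deg_a (\<lambda>_. 0) = 0"
  unfolding deg_x_def deg_a_def by simp_all

lemma finite_bounded_expo: "finite {e :: expo. \<forall>v. e v \<le> n}"
proof -
  have "{e :: expo. \<forall>v. e v \<le> n} = PiE UNIV (\<lambda>_. {..n})"
    by (auto simp: PiE_UNIV_domain)
  then show ?thesis by (simp add: finite_PiE)
qed

lemma expo_le_deg: "e v \<le> deg_x e + deg_a e"
proof (cases v)
  case (Inl i)
  have "e (Inl i) \<le> deg_x e" unfolding deg_x_def by (rule member_le_sum) auto
  then show ?thesis using Inl by simp
next
  case (Inr k)
  have "e (Inr k) \<le> deg_a e" unfolding deg_a_def by (rule member_le_sum) auto
  then show ?thesis using Inr by simp
qed

lemma finite_mono_exps: "finite (mono_exps d1 d2)"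
proof (rule finite_subset[OF _ finite_bounded_expo[of "d1 + d2"]])
  show "mono_exps d1 d2 \<subseteq> {e. \<forall>v. e v \<le> d1 + d2}"
    using expo_le_deg by (fastforce simp: mono_exps_def)
qed

lemma monomials_independent:
  assumes "finite S" "\<And>z. (\<Sum>e\<in>S. f e * monomial e z) = 0" "e \<in> S"
  shows "f e = 0"
  using monomials_independent_on[of "UNIV :: var set" S f e] assms
  by (simp add: monomial_def inj_on_def restrict_def)

section \<open>The Macaulay matrix of the singular locus\<close>

text \<open>A singular point of \<open>X = V(q\<^sub>1,q\<^sub>2,q\<^sub>3)\<close> is a point \<open>x \<noteq> 0\<close> with multipliers \<open>a \<noteq> 0\<close>
  solving the eleven equations \<open>q\<^sub>k(x) = 0\<close> (bidegree \<open>(2,0)\<close>, indexed by \<open>Inl k\<close>) and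
  \<open>\<Sum>\<^sub>k a\<^sub>k \<partial>\<^sub>l q\<^sub>k(x) = 0\<close> (bidegree \<open>(1,1)\<close>, indexed by \<open>Inr l\<close>).\<close>
definition xpart :: "(var \<Rightarrow> complex) \<Rightarrow> complex ^ 8" where "xpart z = (\<chi> i. z (Inl i))"

definition sing_eq :: "quad_triple \<Rightarrow> 3 + 8 \<Rightarrow> (var \<Rightarrow> complex) \<Rightarrow> complex" where
  "sing_eq c e z = (case e of Inl k \<Rightarrow> quad c k (xpart z)
      | Inr l \<Rightarrow> (\<Sum>k\<in>UNIV. z (Inr k) * quad_grad c k (xpart z) $ l))"

definition eq_bideg :: "3 + 8 \<Rightarrow> nat \<times> nat" where
  "eq_bideg e = (case e of Inl _ \<Rightarrow> (2, 0) | Inr _ \<Rightarrow> (1, 1))"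

definition eq_coef :: "quad_triple \<Rightarrow> 3 + 8 \<Rightarrow> expo \<Rightarrow> complex" where
  "eq_coef c e s = (case e of
      Inl k \<Rightarrow> (\<Sum>i\<in>UNIV. \<Sum>j\<in>UNIV.
                  if s = add_exp (unit_exp (Inl i) 1) (unit_exp (Inl j) 1) then coef c k i j else 0)
    | Inr l \<Rightarrow> (\<Sum>k\<in>UNIV. \<Sum>j\<in>UNIV.
                  if s = add_exp (unit_exp (Inl j) 1) (unit_exp (Inr k) 1)
                  then coef c k l j + coef c k j l else 0))"

lemma sing_eq_expansion:
  "sing_eq c e z = (\<Sum>s\<in>mono_exps (fst (eq_bideg e)) (snd (eq_bideg e)). eq_coef c e s * monomial s z)"
proof (cases e)
  case (Inl k)
  let ?m = "\<lambda>i j. add_exp (unit_exp (Inl i) 1) (unit_exp (Inl j) 1)"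
  have mem: "?m i j \<in> mono_exps 2 0" for i j
    by (simp add: mono_exps_def deg_add deg_unit)
  have "(\<Sum>s\<in>mono_exps 2 0. eq_coef c e s * monomial s z)
     = (\<Sum>i\<in>UNIV. \<Sum>j\<in>UNIV. \<Sum>s\<in>mono_exps 2 0. if s = ?m i j then coef c k i j * monomial s z else 0)"
    using Inl unfolding eq_coef_def
    by (simp add: sum_distrib_right if_distrib[of "\<lambda>x. x * _"] cong: if_cong)
      (subst sum.swap, subst (2) sum.swap, rule refl)
  also have "\<dots> = (\<Sum>i\<in>UNIV. \<Sum>j\<in>UNIV. coef c k i j * (z (Inl i) * z (Inl j)))"
    by (simp add: sum.delta[OF finite_mono_exps] mem[simplified] monomial_add monomial_unit)
  also have "\<dots> = quad c k (xpart z)"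
    unfolding quad_def xpart_def by (simp add: mult_ac)
  finally show ?thesis using Inl by (simp add: sing_eq_def eq_bideg_def)
next
  case (Inr l)
  let ?m = "\<lambda>j k. add_exp (unit_exp (Inl j) 1) (unit_exp (Inr k) 1)"
  have mem: "?m j k \<in> mono_exps 1 1" for j k
    by (simp add: mono_exps_def deg_add deg_unit)
  have "(\<Sum>s\<in>mono_exps 1 1. eq_coef c e s * monomial s z)
     = (\<Sum>k\<in>UNIV. \<Sum>j\<in>UNIV. \<Sum>s\<in>mono_exps 1 1.
          if s = ?m j k then (coef c k l j + coef c k j l) * monomial s z else 0)"
    using Inr unfolding eq_coef_def
    by (simp add: sum_distrib_right if_distrib[of "\<lambda>x. x * _"] cong: if_cong)
      (subst sum.swap, subst (2) sum.swap, rule refl)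
  also have "\<dots> = (\<Sum>k\<in>UNIV. \<Sum>j\<in>UNIV. (coef c k l j + coef c k j l) * (z (Inl j) * z (Inr k)))"
    by (simp add: sum.delta[OF finite_mono_exps] mem[simplified] monomial_add monomial_unit)
  also have "\<dots> = (\<Sum>k\<in>UNIV. z (Inr k) * quad_grad c k (xpart z) $ l)"
    unfolding quad_grad_def xpart_def
    by (simp add: sum_distrib_left algebra_simps sum.distrib)
  finally show ?thesis using Inr by (simp add: sing_eq_def eq_bideg_def)
qed

text \<open>The columns of a Macaulay matrix: products of a monomial \<open>t\<close> with an equation \<open>e\<close>,
  of total bidegree \<open>(D1, D2)\<close>.\<close>
definition mult_pairs :: "nat \<Rightarrow> nat \<Rightarrow> (expo \<times> (3 + 8)) set" where
  "mult_pairs D1 D2 =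
     {(t, e). deg_x t + fst (eq_bideg e) = D1 \<and> deg_a t + snd (eq_bideg e) = D2}"

lemma finite_mult_pairs: "finite (mult_pairs D1 D2)"
proof (rule finite_subset)
  show "mult_pairs D1 D2 \<subseteq> {t :: expo. \<forall>v. t v \<le> D1 + D2} \<times> UNIV"
    using expo_le_deg by (fastforce simp: mult_pairs_def intro: order_trans)
qed (simp add: finite_bounded_expo)

definition mult_eq :: "quad_triple \<Rightarrow> expo \<times> (3 + 8) \<Rightarrow> (var \<Rightarrow> complex) \<Rightarrow> complex" where
  "mult_eq c p z = monomial (fst p) z * sing_eq c (snd p) z"

definition mac_entry :: "quad_triple \<Rightarrow> expo \<Rightarrow> expo \<times> (3 + 8) \<Rightarrow> complex" where
  "mac_entry c r p = (\<Sum>s\<in>mono_exps (fst (eq_bideg (snd p))) (snd (eq_bideg (snd p))).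
      if add_exp (fst p) s = r then eq_coef c (snd p) s else 0)"

lemma mult_eq_expansion:
  assumes p: "p \<in> mult_pairs D1 D2"
  shows "mult_eq c p z = (\<Sum>r\<in>mono_exps D1 D2. mac_entry c r p * monomial r z)"
proof -
  obtain t e where te: "p = (t, e)" by (cases p)
  let ?S = "mono_exps (fst (eq_bideg e)) (snd (eq_bideg e))"
  have mem: "s \<in> ?S \<Longrightarrow> add_exp t s \<in> mono_exps D1 D2" for s
    using p te by (auto simp: mono_exps_def mult_pairs_def deg_add)
  have "(\<Sum>r\<in>mono_exps D1 D2. mac_entry c r p * monomial r z)
     = (\<Sum>s\<in>?S. \<Sum>r\<in>mono_exps D1 D2. if add_exp t s = r then eq_coef c e s * monomial r z else 0)"
    unfolding mac_entry_def te
    by (simp add: sum_distrib_right if_distrib[of "\<lambda>x. x * _"] cong: if_cong) (rule sum.swap)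
  also have "\<dots> = (\<Sum>s\<in>?S. eq_coef c e s * monomial (add_exp t s) z)"
    by (intro sum.cong refl) (simp add: sum.delta'[OF finite_mono_exps] mem)
  also have "\<dots> = mult_eq c p z"
    by (simp add: mult_eq_def te sing_eq_expansion monomial_add sum_distrib_left mult_ac)
  finally show ?thesis by simp
qed

text \<open>We work in bidegree \<open>(33, 1)\<close>: since \<open>33 > 8 \<cdot> 4\<close>, each monomial of this bidegree is
  divisible by some \<open>x\<^sub>i\<^sup>5 a\<^sub>l\<close>.\<close>
definition mac_rows :: "expo list" where
  "mac_rows = (SOME xs. set xs = mono_exps 33 1 \<and> distinct xs)"
definition mac_cols :: "(expo \<times> (3 + 8)) list" where
  "mac_cols = (SOME xs. set xs = mult_pairs 33 1 \<and> distinct xs)"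

lemma mac_rows: "set mac_rows = mono_exps 33 1" "distinct mac_rows"
  using someI_ex[OF finite_distinct_list[OF finite_mono_exps]] unfolding mac_rows_def by auto

lemma mac_cols: "set mac_cols = mult_pairs 33 1" "distinct mac_cols"
  using someI_ex[OF finite_distinct_list[OF finite_mult_pairs]] unfolding mac_cols_def by auto

lemma sum_mac_rows: "(\<Sum>r\<in>mono_exps 33 1. f r) = (\<Sum>i\<in>{0..<length mac_rows}. f (mac_rows ! i))"
proof -
  have "bij_betw ((!) mac_rows) {..<length mac_rows} (mono_exps 33 1)"
    by (rule bij_betw_nth) (use mac_rows in auto)
  then show ?thesis by (simp add: sum.reindex_bij_betw[symmetric] atLeast0LessThan)
qed

lemma sum_mac_cols: "(\<Sum>p\<in>mult_pairs 33 1. f p) = (\<Sum>j\<in>{0..<length mac_cols}. f (mac_cols ! j))"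
proof -
  have "bij_betw ((!) mac_cols) {..<length mac_cols} (mult_pairs 33 1)"
    by (rule bij_betw_nth) (use mac_cols in auto)
  then show ?thesis by (simp add: sum.reindex_bij_betw[symmetric] atLeast0LessThan)
qed

definition mac_mat :: "quad_triple \<Rightarrow> complex mat" where
  "mac_mat c = mat (length mac_rows) (length mac_cols)
     (\<lambda>(i, j). mac_entry c (mac_rows ! i) (mac_cols ! j))"

lemma mac_mat_carrier: "mac_mat c \<in> carrier_mat (length mac_rows) (length mac_cols)"
  unfolding mac_mat_def by simp

lemma mult_eq_mac_mat:
  assumes "j < length mac_cols"
  shows "mult_eq c (mac_cols ! j) z
    = (\<Sum>i\<in>{0..<length mac_rows}. mac_mat c $$ (i, j) * monomial (mac_rows ! i) z)"
proof -
  have "mac_cols ! j \<in> mult_pairs 33 1" using assms mac_cols(1) nth_mem by blast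
  then have "mult_eq c (mac_cols ! j) z
      = (\<Sum>r\<in>mono_exps 33 1. mac_entry c r (mac_cols ! j) * monomial r z)"
    by (rule mult_eq_expansion)
  also have "\<dots> = (\<Sum>i\<in>{0..<length mac_rows}.
      mac_entry c (mac_rows ! i) (mac_cols ! j) * monomial (mac_rows ! i) z)"
    by (rule sum_mac_rows)
  finally show ?thesis using assms by (simp add: mac_mat_def)
qed

text \<open>The polynomial detecting genericity: \<open>F\<^sub>c\<^sub>0(c) = det (A(c) A(c\<^sub>0)\<^sup>*)\<close>, where \<open>A\<close> is the
  Macaulay matrix; \<open>F\<^sub>c\<^sub>0(c) \<noteq> 0\<close> forces \<open>A(c)\<close> to have full row rank.\<close>
definition mac_det :: "quad_triple \<Rightarrow> quad_triple \<Rightarrow> complex" where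
  "mac_det c0 c = det (mac_mat c * conj_transpose (mac_mat c0))"

text \<open>If \<open>F\<^sub>c\<^sub>0(c) \<noteq> 0\<close>, every monomial of bidegree \<open>(33,1)\<close> is a combination of the columns, so
  it vanishes at every common zero of the equations.\<close>
lemma monomial_vanishes_at_solution:
  assumes det: "mac_det c0 c \<noteq> 0" and sol: "\<And>e. sing_eq c e z = 0"
    and r: "r \<in> mono_exps 33 1"
  shows "monomial r z = 0"
proof -
  let ?n = "length mac_rows" and ?m = "length mac_cols"
  let ?A = "mac_mat c" and ?B = "conj_transpose (mac_mat c0)"
  define M where "M = ?B * adj_mat (?A * ?B)"
  have B: "?B \<in> carrier_mat ?m ?n" using mac_mat_carrier by (rule conj_transpose_carrier)
  have M: "M \<in> carrier_mat ?m ?n"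
    unfolding M_def using B adj_mat(1)[OF mult_carrier_mat[OF mac_mat_carrier B]] by simp
  have AM: "?A * M = mac_det c0 c \<cdot>\<^sub>m 1\<^sub>m ?n"
    unfolding M_def mac_det_def by (rule scaled_right_inverse[OF mac_mat_carrier B])
  obtain \<iota> where \<iota>: "\<iota> < ?n" "mac_rows ! \<iota> = r" using r mac_rows(1) by (metis in_set_conv_nth)
  have "(\<Sum>i\<in>{0..<?n}. (?A * M) $$ (i, \<iota>) * monomial (mac_rows ! i) z)
      = (\<Sum>i\<in>{0..<?n}. if i = \<iota> then mac_det c0 c * monomial (mac_rows ! i) z else 0)"
    using \<iota>(1) by (intro sum.cong refl) (auto simp: AM)
  also have "\<dots> = mac_det c0 c * monomial r z" using \<iota> by simp
  finally have "mac_det c0 c * monomial r z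
      = (\<Sum>i\<in>{0..<?n}. (?A * M) $$ (i, \<iota>) * monomial (mac_rows ! i) z)" by simp
  also have "\<dots> = (\<Sum>i\<in>{0..<?n}. \<Sum>j\<in>{0..<?m}. ?A $$ (i, j) * M $$ (j, \<iota>) * monomial (mac_rows ! i) z)"
    using \<iota> mac_mat_carrier[of c] M by (simp add: scalar_prod_def sum_distrib_right)
  also have "\<dots> = (\<Sum>j\<in>{0..<?m}. M $$ (j, \<iota>) * mult_eq c (mac_cols ! j) z)"
    by (subst sum.swap) (simp add: mult_eq_mac_mat sum_distrib_left mult_ac)
  also have "\<dots> = 0" by (simp add: mult_eq_def sol)
  finally show ?thesis using det by simp
qed

text \<open>At a singular point \<open>(x, a)\<close> with \<open>x\<^sub>i \<noteq> 0\<close> and \<open>a\<^sub>l \<noteq> 0\<close> the monomial \<open>x\<^sub>i\<^sup>3\<^sup>3 a\<^sub>l\<close> would vanish.\<close>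
lemma smooth_if_mac_det_nonzero:
  assumes det: "mac_det c0 c \<noteq> 0"
  shows "smooth_intersection c"
  unfolding smooth_intersection_def
proof (intro allI impI)
  fix x :: "complex ^ 8" and a :: "3 \<Rightarrow> complex" and l :: 3
  assume x: "x \<noteq> 0 \<and> (\<forall>k. quad c k x = 0)" and a: "(\<Sum>k\<in>UNIV. a k *s quad_grad c k x) = 0"
  define z where "z = (\<lambda>v::var. case v of Inl i \<Rightarrow> x $ i | Inr k \<Rightarrow> a k)"
  have xz: "xpart z = x" by (simp add: xpart_def z_def Finite_Cartesian_Product.vec_eq_iff)
  have az: "z (Inr k) = a k" for k by (simp add: z_def)
  have sol: "sing_eq c e z = 0" for e
  proof (cases e)
    case (Inl k)
    then show ?thesis using x by (simp add: sing_eq_def xz)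
  next
    case (Inr l)
    have "(\<Sum>k\<in>UNIV. a k * quad_grad c k x $ l) = (\<Sum>k\<in>UNIV. a k *s quad_grad c k x) $ l"
      by (simp add: sum_component)
    then show ?thesis using Inr a by (simp add: sing_eq_def xz az)
  qed
  obtain i where xi: "x $ i \<noteq> 0"
    using x by (metis Finite_Cartesian_Product.vec_eq_iff zero_index)
  define r where "r = add_exp (unit_exp (Inl i) 33) (unit_exp (Inr l) 1)"
  have "r \<in> mono_exps 33 1" by (simp add: r_def mono_exps_def deg_add deg_unit)
  then have "monomial r z = 0" by (rule monomial_vanishes_at_solution[OF det sol])
  then have "x $ i ^ 33 * a l = 0" by (simp add: r_def monomial_add monomial_unit z_def)
  then show "a l = 0" using xi by simp
qed

lemma poly_fun_eq_coef: "(\<lambda>c. eq_coef c e s) \<in> poly_fun"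
  unfolding eq_coef_def
  by (cases e) (auto intro!: poly_fun_sum poly_fun_if poly_fun_coef poly_fun.const poly_fun.add)

lemma poly_fun_mac_entry: "(\<lambda>c. mac_entry c r p) \<in> poly_fun"
  unfolding mac_entry_def
  by (auto intro!: poly_fun_sum poly_fun_if poly_fun_eq_coef poly_fun.const finite_mono_exps)

lemma poly_fun_mac_det: "(\<lambda>c. mac_det c0 c) \<in> poly_fun"
  unfolding mac_det_def
proof (rule poly_fun_det)
  let ?B = "conj_transpose (mac_mat c0)"
  have B: "?B \<in> carrier_mat (length mac_cols) (length mac_rows)"
    using mac_mat_carrier by (rule conj_transpose_carrier)
  show "mac_mat c * ?B \<in> carrier_mat (length mac_rows) (length mac_rows)" for c
    using mac_mat_carrier B by (rule mult_carrier_mat)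
  fix i j assume "i < length mac_rows" "j < length mac_rows"
  then have "(mac_mat c * ?B) $$ (i, j)
      = (\<Sum>k\<in>{0..<length mac_cols}. mac_entry c (mac_rows ! i) (mac_cols ! k) * ?B $$ (k, j))" for c
    using B by (simp add: mac_mat_def scalar_prod_def)
  moreover have "(\<lambda>c. \<Sum>k\<in>{0..<length mac_cols}.
      mac_entry c (mac_rows ! i) (mac_cols ! k) * ?B $$ (k, j)) \<in> poly_fun"
    by (auto intro!: poly_fun_sum poly_fun.mult poly_fun_mac_entry poly_fun.const)
  ultimately show "(\<lambda>c. (mac_mat c * ?B) $$ (i, j)) \<in> poly_fun" by simp
qed

lemma mac_det_coef_cong:
  assumes "\<And>k i j. coef c1 k i j = coef c2 k i j"
  shows "mac_det c0 c1 = mac_det c0 c2"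
proof -
  have "coef c1 = coef c2" using assms by (intro ext)
  then have "eq_coef c1 = eq_coef c2" unfolding eq_coef_def by (rule arg_cong)
  then have "mac_entry c1 = mac_entry c2" unfolding mac_entry_def by (rule arg_cong)
  then show ?thesis by (simp add: mac_det_def mac_mat_def)
qed

section \<open>The ideal generated by the equations\<close>

inductive in_ideal :: "quad_triple \<Rightarrow> nat \<Rightarrow> nat \<Rightarrow> ((var \<Rightarrow> complex) \<Rightarrow> complex) \<Rightarrow> bool"
  for c :: quad_triple where
  generator: "in_ideal c (fst (eq_bideg e)) (snd (eq_bideg e)) (sing_eq c e)"
| zero: "in_ideal c D1 D2 (\<lambda>_. 0)"
| add: "in_ideal c D1 D2 f \<Longrightarrow> in_ideal c D1 D2 g \<Longrightarrow> in_ideal c D1 D2 (\<lambda>z. f z + g z)"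
| smult: "in_ideal c D1 D2 f \<Longrightarrow> in_ideal c D1 D2 (\<lambda>z. a * f z)"
| mult_monomial:
    "in_ideal c D1 D2 f \<Longrightarrow> in_ideal c (D1 + deg_x t) (D2 + deg_a t) (\<lambda>z. monomial t z * f z)"

lemma in_ideal_cong:
  assumes "in_ideal c D1 D2 f" "D1 = D1'" "D2 = D2'" "\<And>z. f z = g z"
  shows "in_ideal c D1' D2' g"
proof -
  have "f = g" using assms(4) by (rule ext)
  then show ?thesis using assms(1-3) by simp
qed

lemma in_ideal_mult_x: "in_ideal c D1 D2 f \<Longrightarrow> in_ideal c (Suc D1) D2 (\<lambda>z. z (Inl i) * f z)"
  by (rule in_ideal_cong[OF in_ideal.mult_monomial[of c D1 D2 f "unit_exp (Inl i) 1"]])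
    (simp_all add: deg_unit monomial_unit)

lemma in_ideal_mult_a: "in_ideal c D1 D2 f \<Longrightarrow> in_ideal c D1 (Suc D2) (\<lambda>z. z (Inr k) * f z)"
  by (rule in_ideal_cong[OF in_ideal.mult_monomial[of c D1 D2 f "unit_exp (Inr k) 1"]])
    (simp_all add: deg_unit monomial_unit)

lemma in_ideal_diff:
  "in_ideal c D1 D2 f \<Longrightarrow> in_ideal c D1 D2 g \<Longrightarrow> in_ideal c D1 D2 (\<lambda>z. f z - g z)"
  by (rule in_ideal_cong[OF in_ideal.add[OF _ in_ideal.smult[of c _ _ g "-1"]]]) auto

lemma in_ideal_sum:
  assumes "finite A" "\<And>b. b \<in> A \<Longrightarrow> in_ideal c D1 D2 (f b)"
  shows "in_ideal c D1 D2 (\<lambda>z. \<Sum>b\<in>A. f b z)"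
  using assms
proof (induction A rule: finite_induct)
  case empty
  then show ?case using in_ideal.zero by simp
next
  case (insert x F)
  have "in_ideal c D1 D2 (\<lambda>z. f x z + (\<Sum>b\<in>F. f b z))"
    by (rule in_ideal.add) (use insert in auto)
  then show ?case using insert by simp
qed

lemma combination_mult_monomial:
  assumes f: "\<And>z. f z = (\<Sum>p\<in>mult_pairs D1 D2. w p * mult_eq c p z)"
  shows "\<exists>w'. \<forall>z. monomial t z * f z
            = (\<Sum>p\<in>mult_pairs (D1 + deg_x t) (D2 + deg_a t). w' p * mult_eq c p z)"
proof -
  define shift where "shift p = (add_exp t (fst p), snd p)" for p :: "expo \<times> (3 + 8)"
  have inj: "inj_on shift (mult_pairs D1 D2)"
  proof (rule inj_onI)
    fix p p' assume "shift p = shift p'"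
    then have "add_exp t (fst p) = add_exp t (fst p')" "snd p = snd p'" by (auto simp: shift_def)
    then show "p = p'" by (auto simp: add_exp_def fun_eq_iff prod_eq_iff)
  qed
  have img: "shift ` mult_pairs D1 D2 \<subseteq> mult_pairs (D1 + deg_x t) (D2 + deg_a t)"
    by (auto simp: shift_def mult_pairs_def deg_add)
  define w' where "w' p' = (if p' \<in> shift ` mult_pairs D1 D2
      then w (inv_into (mult_pairs D1 D2) shift p') else 0)" for p'
  have "monomial t z * f z
      = (\<Sum>p\<in>mult_pairs (D1 + deg_x t) (D2 + deg_a t). w' p * mult_eq c p z)" for z
  proof -
    have "monomial t z * f z = (\<Sum>p\<in>mult_pairs D1 D2. w p * mult_eq c (shift p) z)"
      by (simp add: f sum_distrib_left shift_def mult_eq_def monomial_add mult_ac)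
    also have "\<dots> = (\<Sum>p\<in>mult_pairs D1 D2. w' (shift p) * mult_eq c (shift p) z)"
      by (intro sum.cong refl) (simp add: w'_def inv_into_f_f[OF inj])
    also have "\<dots> = (\<Sum>p\<in>shift ` mult_pairs D1 D2. w' p * mult_eq c p z)"
      by (rule sum.reindex[OF inj, unfolded comp_def, symmetric])
    also have "\<dots> = (\<Sum>p\<in>mult_pairs (D1 + deg_x t) (D2 + deg_a t). w' p * mult_eq c p z)"
      by (rule sum.mono_neutral_left[OF finite_mult_pairs img]) (auto simp: w'_def)
    finally show ?thesis .
  qed
  then show ?thesis by blast
qed

lemma in_ideal_combination:
  assumes "in_ideal c D1 D2 f"
  shows "\<exists>w. \<forall>z. f z = (\<Sum>p\<in>mult_pairs D1 D2. w p * mult_eq c p z)"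
  using assms
proof (induction rule: in_ideal.induct)
  case (generator e)
  let ?P = "mult_pairs (fst (eq_bideg e)) (snd (eq_bideg e))"
  define p0 where "p0 = ((\<lambda>_::var. 0::nat), e)"
  have p0: "p0 \<in> ?P" by (simp add: p0_def mult_pairs_def deg_zero)
  have "(\<Sum>p\<in>?P. (if p = p0 then 1 else 0) * mult_eq c p z) = sing_eq c e z" for z
  proof -
    have "(\<Sum>p\<in>?P. (if p = p0 then 1 else 0) * mult_eq c p z)
        = (\<Sum>p\<in>?P. if p = p0 then mult_eq c p z else 0)"
      by (intro sum.cong refl) simp
    also have "\<dots> = mult_eq c p0 z" using p0 by (simp add: finite_mult_pairs)
    also have "\<dots> = sing_eq c e z" by (simp add: mult_eq_def p0_def monomial_zero)
    finally show ?thesis .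
  qed
  then show ?case by (intro exI[of _ "\<lambda>p. if p = p0 then 1 else 0"]) simp
next
  case (zero D1 D2)
  show ?case by (rule exI[of _ "\<lambda>_. 0"]) simp
next
  case (add D1 D2 f g)
  then obtain w1 w2 where "\<forall>z. f z = (\<Sum>p\<in>mult_pairs D1 D2. w1 p * mult_eq c p z)"
    and "\<forall>z. g z = (\<Sum>p\<in>mult_pairs D1 D2. w2 p * mult_eq c p z)" by blast
  then show ?case
    by (intro exI[of _ "\<lambda>p. w1 p + w2 p"]) (simp add: sum.distrib distrib_right)
next
  case (smult D1 D2 f a)
  then obtain w where "\<forall>z. f z = (\<Sum>p\<in>mult_pairs D1 D2. w p * mult_eq c p z)" by blast
  then show ?case
    by (intro exI[of _ "\<lambda>p. a * w p"]) (simp add: sum_distrib_left mult_ac)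
next
  case (mult_monomial D1 D2 f t)
  then obtain w where "\<And>z. f z = (\<Sum>p\<in>mult_pairs D1 D2. w p * mult_eq c p z)" by blast
  then show ?case by (rule combination_mult_monomial)
qed

text \<open>If a monomial \<open>r\<close> of bidegree \<open>(33,1)\<close> lies in the ideal, the corresponding unit vector
  lies in the column space of the Macaulay matrix (by linear independence of monomials).\<close>
lemma unit_row_combination:
  assumes ideal: "in_ideal c 33 1 (monomial r)" and r: "r \<in> mono_exps 33 1"
  shows "\<exists>w. \<forall>r'\<in>mono_exps 33 1.
           (\<Sum>p\<in>mult_pairs 33 1. mac_entry c r' p * w p) = (if r' = r then 1 else 0)"
proof -
  obtain w where w: "\<forall>z. monomial r z = (\<Sum>p\<in>mult_pairs 33 1. w p * mult_eq c p z)"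
    using in_ideal_combination[OF ideal] by blast
  define K where "K r' = (\<Sum>p\<in>mult_pairs 33 1. mac_entry c r' p * w p)" for r'
  have H: "(\<Sum>r'\<in>mono_exps 33 1. (K r' - (if r' = r then 1 else 0)) * monomial r' z) = 0" for z
  proof -
    have "(\<Sum>p\<in>mult_pairs 33 1. w p * mult_eq c p z)
        = (\<Sum>p\<in>mult_pairs 33 1. \<Sum>r'\<in>mono_exps 33 1. w p * (mac_entry c r' p * monomial r' z))"
      by (intro sum.cong refl) (simp add: mult_eq_expansion sum_distrib_left)
    also have "\<dots> = (\<Sum>r'\<in>mono_exps 33 1. K r' * monomial r' z)"
      by (subst sum.swap) (simp add: K_def sum_distrib_left sum_distrib_right mult_ac)
    finally have "monomial r z = (\<Sum>r'\<in>mono_exps 33 1. K r' * monomial r' z)" using w by simp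
    moreover have "(\<Sum>r'\<in>mono_exps 33 1. (if r' = r then 1 else 0) * monomial r' z) = monomial r z"
    proof -
      have "(\<Sum>r'\<in>mono_exps 33 1. (if r' = r then 1 else 0) * monomial r' z)
          = (\<Sum>r'\<in>mono_exps 33 1. if r' = r then monomial r' z else 0)"
        by (intro sum.cong refl) simp
      then show ?thesis using r by (simp add: finite_mono_exps)
    qed
    ultimately show ?thesis by (simp add: left_diff_distrib sum_subtractf)
  qed
  have "\<forall>r'\<in>mono_exps 33 1. K r' - (if r' = r then 1 else 0) = 0"
    using monomials_independent[OF finite_mono_exps H] by blast
  then show ?thesis unfolding K_def by (intro exI[of _ w]) auto
qed

lemma mac_det_self_nonzero:
  assumes all_monomials: "\<And>r. r \<in> mono_exps 33 1 \<Longrightarrow> in_ideal c 33 1 (monomial r)"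
  shows "mac_det c c \<noteq> 0"
  unfolding mac_det_def
proof (rule det_gram_nonzero[OF mac_mat_carrier])
  fix \<iota> assume \<iota>: "\<iota> < length mac_rows"
  have row_mem: "mac_rows ! i \<in> mono_exps 33 1" if "i < length mac_rows" for i
    by (metis mac_rows(1) nth_mem that)
  obtain w where w: "\<forall>r\<in>mono_exps 33 1.
      (\<Sum>p\<in>mult_pairs 33 1. mac_entry c r p * w p) = (if r = mac_rows ! \<iota> then 1 else 0)"
    using unit_row_combination[OF all_monomials[OF row_mem[OF \<iota>]] row_mem[OF \<iota>]] by blast
  have "(\<Sum>j\<in>{0..<length mac_cols}. mac_mat c $$ (i, j) * w (mac_cols ! j))
      = (if i = \<iota> then 1 else 0)" if i: "i < length mac_rows" for i
  proof -
    have "(\<Sum>j\<in>{0..<length mac_cols}. mac_mat c $$ (i, j) * w (mac_cols ! j))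
        = (\<Sum>j\<in>{0..<length mac_cols}. mac_entry c (mac_rows ! i) (mac_cols ! j) * w (mac_cols ! j))"
      using i by (intro sum.cong refl) (simp add: mac_mat_def)
    also have "\<dots> = (\<Sum>p\<in>mult_pairs 33 1. mac_entry c (mac_rows ! i) p * w p)"
      by (rule sum_mac_cols[symmetric])
    also have "\<dots> = (if mac_rows ! i = mac_rows ! \<iota> then 1 else 0)"
      by (rule w[rule_format, OF row_mem[OF i]])
    also have "\<dots> = (if i = \<iota> then 1 else 0)"
      using mac_rows(2) i \<iota> by (simp add: nth_eq_iff_index_eq)
    finally show ?thesis .
  qed
  then show "\<exists>w. \<forall>i<length mac_rows.
      (\<Sum>j\<in>{0..<length mac_cols}. mac_mat c $$ (i, j) * w j) = (if i = \<iota> then 1 else 0)"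
    by (intro exI[of _ "\<lambda>j. w (mac_cols ! j)"]) blast
qed

section \<open>A diagonal witness\<close>

lemma exhaust_8:
  fixes x :: 8
  shows "x = 0 \<or> x = 1 \<or> x = 2 \<or> x = 3 \<or> x = 4 \<or> x = 5 \<or> x = 6 \<or> x = 7"
proof (induct x)
  case (of_int z)
  then have "z = 0 \<or> z = 1 \<or> z = 2 \<or> z = 3 \<or> z = 4 \<or> z = 5 \<or> z = 6 \<or> z = 7" by fastforce
  then show ?case by auto
qed

text \<open>The integer matrix \<open>\<lambda>\<close> of the witness forms \<open>q\<^sub>k = \<Sum>\<^sub>i \<lambda>\<^sub>k\<^sub>i x\<^sub>i\<^sup>2\<close>; every \<open>3 \<times> 3\<close> minor
  is nonzero, and the forms vanish on an explicit plane.\<close>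
definition lam_int :: "3 \<Rightarrow> 8 \<Rightarrow> int" where
 "lam_int k i = (if k = 1 then
    (if i = 0 then -10 else if i = 1 then 10 else if i = 2 then 5 else if i = 3 then -5
     else if i = 4 then -1 else if i = 5 then 1 else 0)
   else if k = 2 then
    (if i = 0 then -10 else if i = 1 then 5 else if i = 2 then 10 else if i = 3 then -1
     else if i = 4 then -5 else if i = 5 then 0 else if i = 6 then 1 else 0)
   else
    (if i = 0 then -6 else if i = 1 then 4 else if i = 2 then 4 else if i = 3 then -1
     else if i = 4 then -1 else if i = 5 then 0 else if i = 6 then 0 else 24))"

definition lam :: "3 \<Rightarrow> 8 \<Rightarrow> complex" where "lam k i = of_int (lam_int k i)"

definition minor_mat :: "8 \<Rightarrow> 8 \<Rightarrow> 8 \<Rightarrow> complex ^ 3 ^ 3" where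
  "minor_mat i j m = (\<chi> k s. lam k (if s = 1 then i else if s = 2 then j else m))"

definition minor_int :: "8 \<Rightarrow> 8 \<Rightarrow> 8 \<Rightarrow> int" where
  "minor_int i j m = lam_int 1 i * lam_int 2 j * lam_int 3 m - lam_int 1 i * lam_int 3 j * lam_int 2 m
     - lam_int 2 i * lam_int 1 j * lam_int 3 m + lam_int 2 i * lam_int 3 j * lam_int 1 m
     + lam_int 3 i * lam_int 1 j * lam_int 2 m - lam_int 3 i * lam_int 2 j * lam_int 1 m"

lemma minor_int_nonzero: "i \<noteq> j \<Longrightarrow> i \<noteq> m \<Longrightarrow> j \<noteq> m \<Longrightarrow> minor_int i j m \<noteq> 0"
  using exhaust_8[of i] exhaust_8[of j] exhaust_8[of m]
  by (elim disjE) (simp_all add: minor_int_def lam_int_def)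

lemma minor_mat_invertible:
  assumes "i \<noteq> j" "i \<noteq> m" "j \<noteq> m"
  shows "invertible (minor_mat i j m)"
proof -
  have "Determinants.det (minor_mat i j m) = of_int (minor_int i j m)"
    by (simp add: det_3 minor_mat_def lam_def minor_int_def algebra_simps)
  then show ?thesis using minor_int_nonzero[OF assms] by (simp add: invertible_det_nz)
qed

lemma lam_columns_span:
  assumes "i \<noteq> j" "i \<noteq> m" "j \<noteq> m"
  shows "\<exists>b1 b2 b3. \<forall>k. b1 * lam k i + b2 * lam k j + b3 * lam k m = (if k = l then 1 else 0)"
proof -
  obtain B where B: "minor_mat i j m ** B = Finite_Cartesian_Product.mat 1"
    using minor_mat_invertible[OF assms] unfolding invertible_def by blast
  have "B$1$l * lam k i + B$2$l * lam k j + B$3$l * lam k m = (if k = l then 1 else 0)" for k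
  proof -
    have "(minor_mat i j m ** B) $ k $ l = (if k = l then 1 else 0)"
      using B by (simp add: Finite_Cartesian_Product.mat_def)
    then show ?thesis by (simp add: matrix_matrix_mult_def sum_3 minor_mat_def mult_ac)
  qed
  then show ?thesis by blast
qed

lemma lam_rows_separate:
  assumes "i \<noteq> j" "i \<noteq> m" "j \<noteq> m"
  shows "\<exists>b. (\<Sum>k\<in>UNIV. b k * lam k i) = 1 \<and> (\<Sum>k\<in>UNIV. b k * lam k j) = 0
           \<and> (\<Sum>k\<in>UNIV. b k * lam k m) = 0"
proof -
  obtain B where B: "B ** minor_mat i j m = Finite_Cartesian_Product.mat 1"
    using minor_mat_invertible[OF assms] unfolding invertible_def by blast
  have e: "(B ** minor_mat i j m) $ 1 $ s = (if 1 = s then 1 else 0)" for s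
    using B by (simp add: Finite_Cartesian_Product.mat_def)
  have "(\<Sum>k\<in>UNIV. B$1$k * lam k i) = 1" "(\<Sum>k\<in>UNIV. B$1$k * lam k j) = 0"
    "(\<Sum>k\<in>UNIV. B$1$k * lam k m) = 0"
    using e[of 1] e[of 2] e[of 3] by (simp_all add: matrix_matrix_mult_def minor_mat_def)
  then show ?thesis by blast
qed

definition witness :: quad_triple where "witness = (\<lambda>(k, i, j). if i = j then lam k i else 0)"

lemma coef_witness: "coef witness k i j = (if i = j then lam k i else 0)"
  unfolding coef_def witness_def by auto

lemma quad_witness: "quad witness k x = (\<Sum>i\<in>UNIV. lam k i * x $ i ^ 2)"
proof -
  have "coef witness k i j * x$i * x$j = (if j = i then lam k i * x$i ^ 2 else 0)" for i j
    by (auto simp: coef_witness power2_eq_square)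
  then show ?thesis unfolding quad_def by simp
qed

lemma quad_grad_witness: "quad_grad witness k x $ l = 2 * lam k l * x $ l"
proof -
  have "coef witness k l j * x$j = (if j = l then lam k l * x$l else 0)" for j
    by (auto simp: coef_witness)
  moreover have "coef witness k i l * x$i = (if i = l then lam k l * x$l else 0)" for i
    by (auto simp: coef_witness)
  ultimately show ?thesis unfolding quad_grad_def by simp
qed

lemma sing_eq_witness_quad: "sing_eq witness (Inl k) z = (\<Sum>i\<in>UNIV. lam k i * z (Inl i) ^ 2)"
  by (simp add: sing_eq_def quad_witness xpart_def)

lemma sing_eq_witness_grad:
  "sing_eq witness (Inr l) z = 2 * (\<Sum>k\<in>UNIV. z (Inr k) * lam k l) * z (Inl l)"
  by (simp add: sing_eq_def quad_grad_witness xpart_def sum_distrib_left sum_distrib_right mult_ac)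

lemma sum_times_indicator:
  fixes f :: "'a::finite \<Rightarrow> 'b::comm_semiring_1"
  shows "(\<Sum>k\<in>UNIV. f k * (if k = l then 1 else 0)) = f l"
proof -
  have "(\<Sum>k\<in>UNIV. f k * (if k = l then 1 else 0)) = (\<Sum>k\<in>UNIV. if k = l then f k else 0)"
    by (rule sum.cong) auto
  then show ?thesis by simp
qed

lemma in_ideal_quad: "in_ideal witness 2 0 (\<lambda>z. \<Sum>i\<in>UNIV. lam k i * z (Inl i) ^ 2)"
  by (rule in_ideal_cong[OF in_ideal.generator[of witness "Inl k"]])
    (simp_all add: eq_bideg_def sing_eq_witness_quad)

lemma in_ideal_grad: "in_ideal witness 1 1 (\<lambda>z. (\<Sum>k\<in>UNIV. z (Inr k) * lam k l) * z (Inl l))"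
  by (rule in_ideal_cong[OF in_ideal.smult[OF in_ideal.generator[of witness "Inr l"], of "1/2"]])
    (simp_all add: eq_bideg_def sing_eq_witness_grad)

text \<open>For distinct \<open>i, j, m\<close>, \<open>x\<^sub>i x\<^sub>j x\<^sub>m a\<^sub>l\<close> lies in the ideal: by the invertible minor, \<open>a\<^sub>l\<close>
  is a combination of \<open>\<Sum>\<^sub>k a\<^sub>k \<lambda>\<^sub>k\<^sub>p\<close> for \<open>p \<in> {i, j, m}\<close>, and \<open>x\<^sub>p\<close> times these is in the ideal.\<close>
lemma in_ideal_xxx_a:
  assumes "i \<noteq> j" "i \<noteq> m" "j \<noteq> m"
  shows "in_ideal witness 3 1 (\<lambda>z. z (Inl i) * z (Inl j) * z (Inl m) * z (Inr l))"
proof -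
  obtain b1 b2 b3
    where b: "\<And>k. b1 * lam k i + b2 * lam k j + b3 * lam k m = (if k = l then 1 else 0)"
    using lam_columns_span[OF assms, of l] by blast
  let ?mu = "\<lambda>p z. \<Sum>k\<in>UNIV. z (Inr k) * lam k p"
  have mu: "b1 * ?mu i z + b2 * ?mu j z + b3 * ?mu m z = z (Inr l)" for z
  proof -
    have "b1 * ?mu i z + b2 * ?mu j z + b3 * ?mu m z
        = (\<Sum>k\<in>UNIV. z (Inr k) * (b1 * lam k i + b2 * lam k j + b3 * lam k m))"
      by (simp add: sum_distrib_left sum.distrib algebra_simps)
    also have "\<dots> = z (Inr l)" by (simp only: b sum_times_indicator)
    finally show ?thesis .
  qed
  have g3: "in_ideal witness 3 1 (\<lambda>z. z (Inl q2) * (z (Inl q3) * (?mu p z * z (Inl p))))" for p q2 q3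
    using in_ideal_mult_x[OF in_ideal_mult_x[OF in_ideal_grad[of p]]] by (simp add: numeral_eq_Suc)
  have "in_ideal witness 3 1 (\<lambda>z. b1 * (z (Inl j) * (z (Inl m) * (?mu i z * z (Inl i))))
     + b2 * (z (Inl i) * (z (Inl m) * (?mu j z * z (Inl j))))
     + b3 * (z (Inl i) * (z (Inl j) * (?mu m z * z (Inl m)))))"
    by (intro in_ideal.add in_ideal.smult g3)
  then show ?thesis
  proof (rule in_ideal_cong)
    fix z
    have "z (Inl i) * z (Inl j) * z (Inl m) * z (Inr l)
        = z (Inl i) * z (Inl j) * z (Inl m) * (b1 * ?mu i z + b2 * ?mu j z + b3 * ?mu m z)"
      by (simp add: mu)
    then show "b1 * (z (Inl j) * (z (Inl m) * (?mu i z * z (Inl i))))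
     + b2 * (z (Inl i) * (z (Inl m) * (?mu j z * z (Inl j))))
     + b3 * (z (Inl i) * (z (Inl j) * (?mu m z * z (Inl m))))
       = z (Inl i) * z (Inl j) * z (Inl m) * z (Inr l)"
      by (simp add: algebra_simps)
  qed simp_all
qed

lemma in_ideal_x_x2_x2_a:
  assumes "i \<noteq> m" "i \<noteq> n" "m \<noteq> n"
  shows "in_ideal witness 5 1 (\<lambda>z. z (Inl i) * z (Inl m) ^ 2 * z (Inl n) ^ 2 * z (Inr l))"
  using in_ideal_mult_x[OF in_ideal_mult_x[OF in_ideal_xxx_a[OF assms, of l]], of m n]
  by (rule in_ideal_cong) (simp_all add: power2_eq_square mult_ac)

lemma exists_other_index: "\<exists>r::8. r \<noteq> i \<and> r \<noteq> m"
proof -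
  have "(0::8) \<noteq> i \<and> 0 \<noteq> m \<or> (1::8) \<noteq> i \<and> 1 \<noteq> m \<or> (2::8) \<noteq> i \<and> 2 \<noteq> m"
    by auto
  then show ?thesis by blast
qed

lemma in_ideal_isolated_square:
  assumes im: "i \<noteq> m"
  obtains cf where "cf m = 0"
    "in_ideal witness 2 0 (\<lambda>z. z (Inl i) ^ 2 + (\<Sum>n\<in>UNIV - {i}. cf n * z (Inl n) ^ 2))"
proof -
  obtain r where r: "r \<noteq> i" "r \<noteq> m" using exists_other_index by blast
  obtain b where b: "(\<Sum>k\<in>UNIV. b k * lam k i) = 1" "(\<Sum>k\<in>UNIV. b k * lam k m) = 0"
    using lam_rows_separate[of i m r] im r by metis
  define cf where "cf n = (\<Sum>k\<in>UNIV. b k * lam k n)" for n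
  have "in_ideal witness 2 0 (\<lambda>z. \<Sum>k\<in>UNIV. b k * (\<Sum>n\<in>UNIV. lam k n * z (Inl n) ^ 2))"
    by (intro in_ideal_sum in_ideal.smult in_ideal_quad) simp
  then have "in_ideal witness 2 0 (\<lambda>z. z (Inl i) ^ 2 + (\<Sum>n\<in>UNIV - {i}. cf n * z (Inl n) ^ 2))"
  proof (rule in_ideal_cong)
    fix z
    have "(\<Sum>k\<in>UNIV. b k * (\<Sum>n\<in>UNIV. lam k n * z (Inl n) ^ 2))
        = (\<Sum>n\<in>UNIV. cf n * z (Inl n) ^ 2)"
      unfolding cf_def by (simp add: sum_distrib_left sum_distrib_right mult_ac) (rule sum.swap)
    also have "\<dots> = z (Inl i) ^ 2 + (\<Sum>n\<in>UNIV - {i}. cf n * z (Inl n) ^ 2)"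
      using b(1) by (simp add: sum.remove[of UNIV i] cf_def)
    finally show "(\<Sum>k\<in>UNIV. b k * (\<Sum>n\<in>UNIV. lam k n * z (Inl n) ^ 2))
        = z (Inl i) ^ 2 + (\<Sum>n\<in>UNIV - {i}. cf n * z (Inl n) ^ 2)" .
  qed simp_all
  moreover have "cf m = 0" using b(2) by (simp add: cf_def)
  ultimately show ?thesis using that by blast
qed

text \<open>Using the isolated square, \<open>x\<^sub>i\<^sup>3 x\<^sub>m\<^sup>2 a\<^sub>l \<equiv> -\<Sum>\<^sub>n c\<^sub>n x\<^sub>i x\<^sub>m\<^sup>2 x\<^sub>n\<^sup>2 a\<^sub>l\<close> with \<open>n \<noteq> i, m\<close>.\<close>
lemma in_ideal_x3_x2_a:
  assumes im: "i \<noteq> m"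
  shows "in_ideal witness 5 1 (\<lambda>z. z (Inl i) ^ 3 * z (Inl m) ^ 2 * z (Inr l))"
proof -
  obtain cf where cm: "cf m = 0"
    and Q: "in_ideal witness 2 0 (\<lambda>z. z (Inl i) ^ 2 + (\<Sum>n\<in>UNIV - {i}. cf n * z (Inl n) ^ 2))"
    using in_ideal_isolated_square[OF im] by blast
  let ?Q = "\<lambda>z. z (Inl i) ^ 2 + (\<Sum>n\<in>UNIV - {i}. cf n * z (Inl n) ^ 2)"
  have A: "in_ideal witness 5 1 (\<lambda>z. z (Inl i) * (z (Inl m) * (z (Inl m) * (z (Inr l) * ?Q z))))"
    using in_ideal_mult_x[OF in_ideal_mult_x[OF in_ideal_mult_x[OF in_ideal_mult_a[OF Q]]]]
    by (simp add: numeral_eq_Suc)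
  have B: "in_ideal witness 5 1
      (\<lambda>z. \<Sum>n\<in>UNIV - {i}. cf n * (z (Inl i) * z (Inl m) ^ 2 * z (Inl n) ^ 2 * z (Inr l)))"
  proof (rule in_ideal_sum)
    fix n assume n: "n \<in> UNIV - {i}"
    show "in_ideal witness 5 1 (\<lambda>z. cf n * (z (Inl i) * z (Inl m) ^ 2 * z (Inl n) ^ 2 * z (Inr l)))"
    proof (cases "n = m")
      case True
      then show ?thesis using cm by (simp add: in_ideal.zero)
    next
      case False
      then show ?thesis using n im by (intro in_ideal.smult in_ideal_x_x2_x2_a) auto
    qed
  qed simp
  show ?thesis
  proof (rule in_ideal_cong[OF in_ideal_diff[OF A B]])
    fix z
    show "z (Inl i) * (z (Inl m) * (z (Inl m) * (z (Inr l) * ?Q z)))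
      - (\<Sum>n\<in>UNIV - {i}. cf n * (z (Inl i) * z (Inl m) ^ 2 * z (Inl n) ^ 2 * z (Inr l)))
      = z (Inl i) ^ 3 * z (Inl m) ^ 2 * z (Inr l)"
      by (simp add: algebra_simps sum_distrib_left sum_distrib_right power2_eq_square power3_eq_cube)
  qed simp_all
qed

text \<open>Similarly \<open>x\<^sub>i\<^sup>5 a\<^sub>l \<equiv> -\<Sum>\<^sub>n c\<^sub>n x\<^sub>i\<^sup>3 x\<^sub>n\<^sup>2 a\<^sub>l\<close> with \<open>n \<noteq> i\<close>.\<close>
lemma in_ideal_x5_a: "in_ideal witness 5 1 (\<lambda>z. z (Inl i) ^ 5 * z (Inr l))"
proof -
  obtain m where "m \<noteq> i" using exists_other_index by blast
  then obtain cf
    where Q: "in_ideal witness 2 0 (\<lambda>z. z (Inl i) ^ 2 + (\<Sum>n\<in>UNIV - {i}. cf n * z (Inl n) ^ 2))"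
    using in_ideal_isolated_square[of i m] by blast
  let ?Q = "\<lambda>z. z (Inl i) ^ 2 + (\<Sum>n\<in>UNIV - {i}. cf n * z (Inl n) ^ 2)"
  have A: "in_ideal witness 5 1 (\<lambda>z. z (Inl i) * (z (Inl i) * (z (Inl i) * (z (Inr l) * ?Q z))))"
    using in_ideal_mult_x[OF in_ideal_mult_x[OF in_ideal_mult_x[OF in_ideal_mult_a[OF Q]]]]
    by (simp add: numeral_eq_Suc)
  have B: "in_ideal witness 5 1
      (\<lambda>z. \<Sum>n\<in>UNIV - {i}. cf n * (z (Inl i) ^ 3 * z (Inl n) ^ 2 * z (Inr l)))"
    by (intro in_ideal_sum in_ideal.smult in_ideal_x3_x2_a) auto
  show ?thesis
  proof (rule in_ideal_cong[OF in_ideal_diff[OF A B]])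
    fix z
    show "z (Inl i) * (z (Inl i) * (z (Inl i) * (z (Inr l) * ?Q z)))
      - (\<Sum>n\<in>UNIV - {i}. cf n * (z (Inl i) ^ 3 * z (Inl n) ^ 2 * z (Inr l)))
      = z (Inl i) ^ 5 * z (Inr l)"
      by (simp add: algebra_simps sum_distrib_left sum_distrib_right power2_eq_square power3_eq_cube)
        (simp add: power_def)
  qed simp_all
qed

text \<open>Every monomial of bidegree \<open>(33,1)\<close> is divisible by some \<open>x\<^sub>i\<^sup>5 a\<^sub>l\<close> (since \<open>33 > 8 \<cdot> 4\<close>)
  and hence lies in the ideal.\<close>
lemma in_ideal_monomial:
  assumes e: "e \<in> mono_exps 33 1"
  shows "in_ideal witness 33 1 (monomial e)"
proof -
  have dx: "deg_x e = 33" and da: "deg_a e = 1" using e by (auto simp: mono_exps_def)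
  have "\<exists>i. e (Inl i) \<ge> 5"
  proof (rule ccontr)
    assume nx: "\<not> (\<exists>i. e (Inl i) \<ge> 5)"
    have "\<forall>i. e (Inl i) \<le> 4"
    proof
      fix i have "\<not> 5 \<le> e (Inl i)" using nx by blast
      then show "e (Inl i) \<le> 4" by linarith
    qed
    then have "deg_x e \<le> of_nat (card (UNIV :: 8 set)) * 4"
      unfolding deg_x_def by (intro sum_bounded_above) auto
    then show False using dx by simp
  qed
  then obtain i where i: "e (Inl i) \<ge> 5" by blast
  have "\<exists>l. e (Inr l) \<ge> 1"
  proof (rule ccontr)
    assume "\<not> (\<exists>l. e (Inr l) \<ge> 1)"
    then have "\<forall>k. e (Inr k) = 0" by (metis less_one not_less)
    then have "deg_a e = 0" unfolding deg_a_def by simp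
    then show False using da by simp
  qed
  then obtain l where l: "e (Inr l) \<ge> 1" by blast
  define s where "s = add_exp (unit_exp (Inl i) 5) (unit_exp (Inr l) 1)"
  define t where "t = (\<lambda>v. e v - s v)"
  have est: "e = add_exp t s"
    unfolding t_def s_def add_exp_def unit_exp_def using i l by (auto intro!: ext)
  have ds: "deg_x s = 5" "deg_a s = 1"
    by (simp_all add: s_def deg_add deg_unit)
  have dt: "deg_x t = 28" "deg_a t = 0" using dx da ds unfolding est deg_add by simp_all
  have ms: "monomial s z = z (Inl i) ^ 5 * z (Inr l)" for z by (simp add: s_def monomial_add monomial_unit)
  show ?thesis
    using in_ideal.mult_monomial[OF in_ideal_x5_a[of i l], of t]
  proof (rule in_ideal_cong)
    fix z show "monomial t z * (z (Inl i) ^ 5 * z (Inr l)) = monomial e z"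
      by (subst est) (simp add: monomial_add ms)
  qed (simp_all add: dt)
qed

lemma mac_det_witness: "mac_det witness witness \<noteq> 0"
  by (rule mac_det_self_nonzero[OF in_ideal_monomial])

lemma UNIV_8: "UNIV = {0, 1, 2, 3, 4, 5, 6, 7 :: 8}"
  using exhaust_8 by auto

lemma sum_8: "(\<Sum>i\<in>UNIV. f i) = f 0 + f 1 + f 2 + f 3 + f 4 + f 5 + f 6 + (f (7::8) :: complex)"
  unfolding UNIV_8 by (simp add: algebra_simps)

text \<open>The plane spanned by the points \<open>(1, t, t\<^sup>2)\<close> for \<open>t = 0, 1, -1, 2, -2, 3, -3\<close> in the
  first seven coordinates, together with the last coordinate vector.\<close>
definition sample :: "8 \<Rightarrow> complex" where
  "sample i = (if i = 1 then 1 else if i = 2 then -1 else if i = 3 then 2 else if i = 4 then -2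
     else if i = 5 then 3 else if i = 6 then -3 else 0)"

definition plane_basis :: "nat \<Rightarrow> complex ^ 8" where
  "plane_basis p = (\<chi> i. if i = 7 then (if p = 2 then 1 else 0) else sample i ^ p)"

lemma plane_basis_independent: "lin_indep3 (plane_basis 0) (plane_basis 1) (plane_basis 2)"
  unfolding lin_indep3_def
proof (intro allI impI)
  fix a b d :: complex
  assume h: "a *s plane_basis 0 + b *s plane_basis 1 + d *s plane_basis 2 = 0"
  have "(a *s plane_basis 0 + b *s plane_basis 1 + d *s plane_basis 2) $ i = 0" for i
    using h by simp
  from this[of 0] this[of 1] this[of 2] have "a = 0" "a + b + d = 0" "a - b + d = 0"
    by (simp_all add: plane_basis_def sample_def)
  then show "a = 0 \<and> b = 0 \<and> d = 0" by auto
qed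

lemma expand_square_sum:
  fixes L x y w :: "'i::finite \<Rightarrow> complex"
  shows "(\<Sum>i\<in>UNIV. L i * (a * x i + b * y i + d * w i) ^ 2)
     = a^2 * (\<Sum>i\<in>UNIV. L i * x i * x i) + b^2 * (\<Sum>i\<in>UNIV. L i * y i * y i)
       + d^2 * (\<Sum>i\<in>UNIV. L i * w i * w i) + 2 * a * b * (\<Sum>i\<in>UNIV. L i * x i * y i)
       + 2 * a * d * (\<Sum>i\<in>UNIV. L i * x i * w i) + 2 * b * d * (\<Sum>i\<in>UNIV. L i * y i * w i)"
proof -
  have "L i * (a * x i + b * y i + d * w i) ^ 2 = a^2 * (L i * x i * x i) + b^2 * (L i * y i * y i)
       + d^2 * (L i * w i * w i) + 2 * a * b * (L i * x i * y i)
       + 2 * a * d * (L i * x i * w i) + 2 * b * d * (L i * y i * w i)" for i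
    by (simp add: power2_eq_square algebra_simps)
  then show ?thesis by (simp add: sum.distrib sum_distrib_left)
qed

lemma lam_values:
  "lam k 0 = (if k = 1 then -10 else if k = 2 then -10 else -6)"
  "lam k 1 = (if k = 1 then 10 else if k = 2 then 5 else 4)"
  "lam k 2 = (if k = 1 then 5 else if k = 2 then 10 else 4)"
  "lam k 3 = (if k = 1 then -5 else if k = 2 then -1 else -1)"
  "lam k 4 = (if k = 1 then -1 else if k = 2 then -5 else -1)"
  "lam k 5 = (if k = 1 then 1 else 0)"
  "lam k 6 = (if k = 1 then 0 else if k = 2 then 1 else 0)"
  "lam k 7 = (if k = 1 then 0 else if k = 2 then 0 else 24)"
  by (simp_all add: lam_def lam_int_def)

lemma witness_isotropic:
  assumes "p \<le> 2" "q \<le> 2"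
  shows "(\<Sum>i\<in>UNIV. lam k i * plane_basis p $ i * plane_basis q $ i) = 0"
proof -
  have "p = 0 \<or> p = 1 \<or> p = 2" "q = 0 \<or> q = 1 \<or> q = 2" using assms by auto
  then show ?thesis
    unfolding sum_8 lam_values
    using exhaust_3[of k] by (elim disjE) (simp_all add: plane_basis_def sample_def)
qed

lemma witness_contains_plane:
  "contains_plane witness (plane_basis 0) (plane_basis 1) (plane_basis 2)"
  unfolding contains_plane_def
proof (intro allI)
  fix k a b d
  have "quad witness k (a *s plane_basis 0 + b *s plane_basis 1 + d *s plane_basis 2)
      = (\<Sum>i\<in>UNIV. lam k i *
          (a * plane_basis 0 $ i + b * plane_basis 1 $ i + d * plane_basis 2 $ i) ^ 2)"
    by (simp add: quad_witness)
  also have "\<dots> = 0"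
    unfolding expand_square_sum by (simp add: witness_isotropic)
  finally show "quad witness k (a *s plane_basis 0 + b *s plane_basis 1 + d *s plane_basis 2) = 0" .
qed

section \<open>Moving one plane onto another\<close>

lemma lin_indep3_independent:
  assumes "lin_indep3 u1 u2 u3"
  shows "vec.independent {u1, u2, u3}" "u1 \<noteq> u2" "u1 \<noteq> u3" "u2 \<noteq> u3"
proof -
  have L: "\<And>a b d. a *s u1 + b *s u2 + d *s u3 = 0 \<Longrightarrow> a = 0 \<and> b = 0 \<and> d = 0"
    using assms unfolding lin_indep3_def by blast
  show n12: "u1 \<noteq> u2"
  proof
    assume "u1 = u2"
    then have "1 *s u1 + (-1) *s u2 + 0 *s u3 = 0" by simp
    from L[OF this] show False by simp
  qed
  show n13: "u1 \<noteq> u3"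
  proof
    assume "u1 = u3"
    then have "1 *s u1 + 0 *s u2 + (-1) *s u3 = 0" by simp
    from L[OF this] show False by simp
  qed
  show n23: "u2 \<noteq> u3"
  proof
    assume "u2 = u3"
    then have "0 *s u1 + 1 *s u2 + (-1) *s u3 = 0" by simp
    from L[OF this] show False by simp
  qed
  show "vec.independent {u1, u2, u3}"
  proof (rule vec.independent_if_scalars_zero)
    fix f x assume s: "(\<Sum>x\<in>{u1, u2, u3}. f x *s x) = 0" and x: "x \<in> {u1, u2, u3}"
    have "f u1 *s u1 + f u2 *s u2 + f u3 *s u3 = 0" using s n12 n13 n23 by (simp add: add.assoc)
    then show "f x = 0" using L x by blast
  qed simp
qed

lemma extend_bij_betw:
  assumes g: "bij_betw g P U" and PE: "P \<subseteq> E" and UF: "U \<subseteq> F"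
    and fin: "finite E" "finite F" and card: "card E = card F"
  shows "\<exists>h. bij_betw h E F \<and> (\<forall>b\<in>P. h b = g b)"
proof -
  have "card P = card U" using g by (rule bij_betw_same_card)
  then have "card (E - P) = card (F - U)"
    using card PE UF fin by (simp add: card_Diff_subset finite_subset)
  then obtain h0 where h0: "bij_betw h0 (E - P) (F - U)"
    using fin finite_same_card_bij by (meson finite_Diff)
  define h where "h b = (if b \<in> P then g b else h0 b)" for b
  have "bij_betw h P U" using g by (rule bij_betw_cong[THEN iffD1, rotated]) (simp add: h_def)
  moreover have "bij_betw h (E - P) (F - U)"
    using h0 by (rule bij_betw_cong[THEN iffD1, rotated]) (simp add: h_def)
  ultimately have "bij_betw h (P \<union> (E - P)) (U \<union> (F - U))"
    by (rule bij_betw_combine) blast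
  moreover have "P \<union> (E - P) = E" "U \<union> (F - U) = F" using PE UF by auto
  ultimately show ?thesis by (auto simp: h_def)
qed

lemma card_basis:
  assumes "vec.independent (B :: (complex ^ 'n) set)" "vec.span B = UNIV"
  shows "card B = CARD('n)"
  using vec.dim_span_eq_card_independent[OF assms(1)] assms(2) vec_dim_card[where 'a = complex and 'n = 'n]
  by simp

lemma invertible_extension:
  fixes P U :: "(complex ^ 'n) set"
  assumes P: "vec.independent P" and U: "vec.independent U" and g: "bij_betw g P U"
  shows "\<exists>V W. V ** W = Finite_Cartesian_Product.mat 1 \<and> W ** V = Finite_Cartesian_Product.mat 1
           \<and> (\<forall>b\<in>P. V *v b = g b)"
proof -
  define E where "E = vec.extend_basis P"
  define F where "F = vec.extend_basis U"
  have E: "P \<subseteq> E" "vec.independent E" "vec.span E = UNIV"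
    unfolding E_def using P
    by (simp_all add: vec.extend_basis_superset vec.independent_extend_basis vec.span_extend_basis)
  have F: "U \<subseteq> F" "vec.independent F" "vec.span F = UNIV"
    unfolding F_def using U
    by (simp_all add: vec.extend_basis_superset vec.independent_extend_basis vec.span_extend_basis)
  have "finite E" "finite F" using E(2) F(2) by (simp_all add: vec.finiteI_independent)
  moreover have "card E = card F" by (simp add: card_basis E(2,3) F(2,3))
  ultimately obtain h where h: "bij_betw h E F" "\<forall>b\<in>P. h b = g b"
    using extend_bij_betw[OF g E(1) F(1)] by blast
  define f where "f = vec.construct E h"
  have lin: "Vector_Spaces.linear (*s) (*s) f" unfolding f_def by (rule vec.linear_construct[OF E(2)])
  have fE: "b \<in> E \<Longrightarrow> f b = h b" for b unfolding f_def by (rule vec.construct_basis[OF E(2)])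
  then have "f ` E = F" using h(1) by (simp add: bij_betw_def)
  then have "range f = UNIV"
    using vec.linear_span_image[OF lin, of E] E(3) F(3) by simp
  then obtain W where VW: "matrix f ** W = Finite_Cartesian_Product.mat 1"
    using matrix_right_invertible_surjective by (metis matrix_works[OF lin] surj_def)
  then have "W ** matrix f = Finite_Cartesian_Product.mat 1" by (simp add: matrix_left_right_inverse)
  moreover have "\<forall>b\<in>P. matrix f *v b = g b" using E(1) h(2) fE by (auto simp: matrix_works[OF lin])
  ultimately show ?thesis using VW by blast
qed

lemma plane_transport:
  assumes p: "lin_indep3 p1 p2 p3" and u: "lin_indep3 u1 u2 u3"
  shows "\<exists>V W. V ** W = Finite_Cartesian_Product.mat 1 \<and> W ** V = Finite_Cartesian_Product.mat 1
      \<and> V *v p1 = u1 \<and> V *v p2 = u2 \<and> V *v p3 = (u3 :: complex ^ 8)"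
proof -
  note P = lin_indep3_independent[OF p] and U = lin_indep3_independent[OF u]
  define g where "g b = (if b = p1 then u1 else if b = p2 then u2 else u3)" for b
  have "bij_betw g {p1, p2, p3} {u1, u2, u3}"
    using P(2-4) U(2-4) by (auto simp: bij_betw_def inj_on_def g_def)
  then obtain V W where "V ** W = Finite_Cartesian_Product.mat 1" "W ** V = Finite_Cartesian_Product.mat 1"
      "\<forall>b\<in>{p1, p2, p3}. V *v b = g b"
    using invertible_extension[OF P(1) U(1)] by blast
  then show ?thesis using P(2-4) by (auto simp: g_def)
qed

theorem lemma1p6:
  fixes u1 u2 u3 :: "complex ^ 8"
  assumes "lin_indep3 u1 u2 u3"
  shows "\<exists>F \<in> poly_fun.
           (\<exists>c. contains_plane c u1 u2 u3 \<and> F c \<noteq> 0) \<and>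
           (\<forall>c. contains_plane c u1 u2 u3 \<and> F c \<noteq> 0 \<longrightarrow> smooth_intersection c)"
proof -
  obtain V W where VW: "V ** W = Finite_Cartesian_Product.mat 1"
      and WV: "W ** V = Finite_Cartesian_Product.mat 1"
      and to_P: "V *v plane_basis 0 = u1" "V *v plane_basis 1 = u2" "V *v plane_basis 2 = u3"
    using plane_transport[OF plane_basis_independent assms] by blast
  define F where "F c = mac_det witness (pullback c V)" for c
  have "F \<in> poly_fun"
    unfolding F_def by (rule poly_fun_compose[OF poly_fun_mac_det poly_fun_pullback])
  moreover have "contains_plane (pullback witness W) u1 u2 u3"
    using contains_plane_pullback[OF WV witness_contains_plane] by (simp only: to_P)
  moreover have "F (pullback witness W) \<noteq> 0"
    using mac_det_witness coef_pullback_pullback[OF WV]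
    by (simp add: F_def mac_det_coef_cong[of "pullback (pullback witness W) V" witness])
  moreover have "smooth_intersection c" if "F c \<noteq> 0" for c
    using smooth_intersection_pullback[OF VW smooth_if_mac_det_nonzero] that by (simp add: F_def)
  ultimately show ?thesis by blast
qed

end
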